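(* For any tournament $\mathrel{W}$, every $\mathrel{W}$-efficient ranking is $\mathrel{W}$-unimprovable.
   Context: Let $\mathcal{X}$ be a finite set of alternatives. A proto-ranking is an irreflexive and transitive binary relation on $\mathcal{X}$; a ranking is a total proto-ranking; a tournament is a total and asymmetric binary relation on $\mathcal{X}$. The chair has a fixed preference $\succ$, a ranking on $\mathcal{X}$. Interaction: given a tournament $\mathrel{W}$, start from $R_0=\varnothing$; in each period with $R_{t-1}$ not total the chair offers a pair $\{x,y\}$ unranked by $R_{t-1}$, the winner is $x$ if $x\mathrel{W}y$ and $y$ otherwise, and $R_t$ is the transitive closure of $R_{t-1}\cup\{(\text{winner},\text{loser})\}$; stop when $R_t$ is total. A strategy assigns to each non-terminal history (sequence of (winner, loser) pairs) a pair unranked at it; its outcome under $\mathrel{W}$ is the final ranking. A ranking is $\mathrel{W}$-feasible if it is the outcome under $\mathrel{W}$ of some strategy. $R$ is more aligned with $\succ$ than $R'$ if for all $x\succ y$, $xR'y$ implies $xRy$. A ranking is $\mathrel{W}$-unimprovable if no other $\mathrel{W}$-feasible ranking is more aligned with $\succ$ than it. A ranking $R$ is $\mathrel{W}$-efficient if $x\succ y$ and $x\mathrel{W}y$ imply $xRy$. *)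

theory Defs
  imports Main
begin

definition proto_ranking :: "'a set \<Rightarrow> 'a rel \<Rightarrow> bool" where
  "proto_ranking X R \<longleftrightarrow> R \<subseteq> X \<times> X \<and> irrefl_on X R \<and> trans R"

definition ranking :: "'a set \<Rightarrow> 'a rel \<Rightarrow> bool" where
  "ranking X R \<longleftrightarrow> proto_ranking X R \<and> total_on X R"

definition tournament :: "'a set \<Rightarrow> 'a rel \<Rightarrow> bool" where
  "tournament X W \<longleftrightarrow> W \<subseteq> X \<times> X \<and> total_on X W
     \<and> (\<forall>x y. (x, y) \<in> W \<longrightarrow> (y, x) \<notin> W)"

definition unranked :: "'a set \<Rightarrow> 'a rel \<Rightarrow> 'a \<times> 'a \<Rightarrow> bool" where
  "unranked X R p \<longleftrightarrow> fst p \<in> X \<and> snd p \<in> X \<and> fst p \<noteq> snd p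
     \<and> (fst p, snd p) \<notin> R \<and> (snd p, fst p) \<notin> R"

text \<open>Relation generated by a history (list of (winner, loser) pairs):
  R_0 = {} and R_t = transitive closure of R_{t-1} plus the new pair.\<close>
definition hist_rel :: "('a \<times> 'a) list \<Rightarrow> 'a rel" where
  "hist_rel h = foldl (\<lambda>R p. trancl (R \<union> {p})) {} h"

text \<open>Result of offering the pair {x,y} under W: (winner, loser).\<close>
definition contest :: "'a rel \<Rightarrow> 'a \<times> 'a \<Rightarrow> 'a \<times> 'a" where
  "contest W p = (if (fst p, snd p) \<in> W then (fst p, snd p) else (snd p, fst p))"

text \<open>A strategy assigns to every non-terminal history an unranked pair
  (the unordered pair {x,y} is represented by an ordered pair).\<close>
definition strategy :: "'a set \<Rightarrow> (('a \<times> 'a) list \<Rightarrow> 'a \<times> 'a) \<Rightarrow> bool" where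
  "strategy X \<sigma> \<longleftrightarrow> (\<forall>h. set h \<subseteq> X \<times> X \<longrightarrow> \<not> total_on X (hist_rel h)
      \<longrightarrow> unranked X (hist_rel h) (\<sigma> h))"

fun play :: "'a set \<Rightarrow> 'a rel \<Rightarrow> (('a \<times> 'a) list \<Rightarrow> 'a \<times> 'a) \<Rightarrow> nat \<Rightarrow> ('a \<times> 'a) list" where
  "play X W \<sigma> 0 = []"
| "play X W \<sigma> (Suc n) = (let h = play X W \<sigma> n in
      if total_on X (hist_rel h) then h else h @ [contest W (\<sigma> h)])"

definition outcome :: "'a set \<Rightarrow> 'a rel \<Rightarrow> (('a \<times> 'a) list \<Rightarrow> 'a \<times> 'a) \<Rightarrow> 'a rel \<Rightarrow> bool" where
  "outcome X W \<sigma> R \<longleftrightarrow> (\<exists>n. total_on X (hist_rel (play X W \<sigma> n)) \<and> R = hist_rel (play X W \<sigma> n))"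

definition feasible :: "'a set \<Rightarrow> 'a rel \<Rightarrow> 'a rel \<Rightarrow> bool" where
  "feasible X W R \<longleftrightarrow> ranking X R \<and> (\<exists>\<sigma>. strategy X \<sigma> \<and> outcome X W \<sigma> R)"

text \<open>R is more aligned with P (the chair's preference) than R'.\<close>
definition more_aligned :: "'a rel \<Rightarrow> 'a rel \<Rightarrow> 'a rel \<Rightarrow> bool" where
  "more_aligned P R R' \<longleftrightarrow> (\<forall>x y. (x, y) \<in> P \<longrightarrow> (x, y) \<in> R' \<longrightarrow> (x, y) \<in> R)"

definition unimprovable :: "'a set \<Rightarrow> 'a rel \<Rightarrow> 'a rel \<Rightarrow> 'a rel \<Rightarrow> bool" where
  "unimprovable X P W R \<longleftrightarrow> ranking X R \<and>
     \<not> (\<exists>R'. feasible X W R' \<and> R' \<noteq> R \<and> more_aligned P R' R)"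

definition efficient :: "'a set \<Rightarrow> 'a rel \<Rightarrow> 'a rel \<Rightarrow> 'a rel \<Rightarrow> bool" where
  "efficient X P W R \<longleftrightarrow> ranking X R \<and>
     (\<forall>x y. (x, y) \<in> P \<longrightarrow> (x, y) \<in> W \<longrightarrow> (x, y) \<in> R)"

end

theory Submission
  imports Defs
begin

text \<open>Every feasible ranking is the transitive closure of a set of W-edges, namely the
  contests actually played. If a feasible R' differed from the efficient R, the two would
  order some pair oppositely, and along a chain of played edges witnessing the R'-order some
  single edge (a, b) \<in> W would be reversed by R. Comparing a and b under the chair's
  preference gives a contradiction either way: if a is preferred, efficiency puts (a, b) into
  R; if b is preferred, alignment of R' puts (b, a) into R', which already contains (a, b).\<close>

lemma foldl_trancl_insert:
  "trans A \<Longrightarrow> foldl (\<lambda>R p. trancl (R \<union> {p})) A h = trancl (A \<union> set h)"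
proof (induction h arbitrary: A)
  case Nil
  then show ?case by simp
next
  case (Cons p h)
  have "foldl (\<lambda>R p. trancl (R \<union> {p})) A (p # h)
      = trancl (trancl (A \<union> {p}) \<union> set h)"
    using Cons.IH[of "trancl (A \<union> {p})"] by simp
  also have "\<dots> = trancl (A \<union> set (p # h))"
    by (simp add: trancl_trancl_Un Un_assoc insert_commute)
  finally show ?case .
qed

lemma hist_rel_eq_trancl: "hist_rel h = trancl (set h)"
  unfolding hist_rel_def using foldl_trancl_insert[of "{}" h] by (simp add: trans_def)

lemma contest_in_tournament:
  assumes "tournament X W" and "unranked X R p"
  shows "contest W p \<in> W"
  using assms unfolding tournament_def total_on_def unranked_def contest_def
  by (cases p) auto

lemma set_play_subset:
  assumes "tournament X W" and "strategy X \<sigma>"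
  shows "set (play X W \<sigma> n) \<subseteq> W"
proof (induction n)
  case 0
  then show ?case by simp
next
  case (Suc n)
  let ?h = "play X W \<sigma> n"
  have "set ?h \<subseteq> X \<times> X"
    using Suc.IH assms(1) unfolding tournament_def by blast
  then have "\<not> total_on X (hist_rel ?h) \<Longrightarrow> contest W (\<sigma> ?h) \<in> W"
    using assms contest_in_tournament unfolding strategy_def by blast
  then show ?case
    using Suc.IH by (simp add: Let_def)
qed

lemma feasible_eq_trancl:
  assumes "tournament X W" and "feasible X W R"
  obtains S where "S \<subseteq> W" and "R = trancl S"
  using assms set_play_subset hist_rel_eq_trancl
  unfolding feasible_def outcome_def by metis

lemma ranking_subset: "ranking X R \<Longrightarrow> R \<subseteq> X \<times> X"
  unfolding ranking_def proto_ranking_def by blast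

lemma ranking_asym:
  assumes "ranking X R" and "(x, y) \<in> R"
  shows "(y, x) \<notin> R"
  using assms unfolding ranking_def proto_ranking_def irrefl_on_def trans_def by blast

lemma ranking_total:
  assumes "ranking X R" and "x \<in> X" and "y \<in> X" and "x \<noteq> y"
  shows "(x, y) \<in> R \<or> (y, x) \<in> R"
  using assms unfolding ranking_def total_on_def by blast

lemma ranking_converse_if_not_mem:
  assumes R: "ranking X R" and R': "ranking X R'" and "(x, y) \<in> R'" and "(x, y) \<notin> R"
  shows "(y, x) \<in> R"
proof -
  have "x \<in> X" "y \<in> X" using \<open>(x, y) \<in> R'\<close> ranking_subset[OF R'] by auto
  moreover have "x \<noteq> y" using \<open>(x, y) \<in> R'\<close> ranking_asym[OF R' \<open>(x, y) \<in> R'\<close>] by blast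
  ultimately show ?thesis using ranking_total[OF R] \<open>(x, y) \<notin> R\<close> by blast
qed

lemma ranking_neq_reversed_pair:
  assumes R: "ranking X R" and R': "ranking X R'" and "R' \<noteq> R"
  obtains x y where "(x, y) \<in> R'" and "(y, x) \<in> R"
proof -
  obtain x y where "(x, y) \<in> R' \<and> (x, y) \<notin> R \<or> (x, y) \<in> R \<and> (x, y) \<notin> R'"
    using assms(3) by auto
  then show thesis
  proof (elim disjE conjE)
    assume "(x, y) \<in> R'" "(x, y) \<notin> R"
    then show thesis using that ranking_converse_if_not_mem[OF R R'] by blast
  next
    assume "(x, y) \<in> R" "(x, y) \<notin> R'"
    then show thesis using that ranking_converse_if_not_mem[OF R' R] by blast
  qed
qed

lemma trancl_reversed_edge:
  assumes "(x, y) \<in> trancl S" and "S \<subseteq> X \<times> X" and "(y, x) \<in> R"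
    and "trans R" and "total_on X R"
  obtains a b where "(a, b) \<in> S" and "(b, a) \<in> R"
proof -
  from assms(1,3) have "\<exists>a b. (a, b) \<in> S \<and> (b, a) \<in> R"
  proof (induction rule: trancl_induct)
    case (base y)
    then show ?case by blast
  next
    case (step y z)
    have "y \<in> X" "z \<in> X" using step.hyps(2) assms(2) by auto
    then have "(z, y) \<in> R \<or> z = y \<or> (y, z) \<in> R"
      using assms(5) unfolding total_on_def by blast
    then show ?case
    proof (elim disjE)
      assume "(z, y) \<in> R"
      then show ?thesis using step.hyps(2) by blast
    next
      assume "z = y"
      then show ?thesis using step.IH step.prems by blast
    next
      assume "(y, z) \<in> R"
      then have "(y, x) \<in> R" using step.prems assms(4) unfolding trans_def by blast
      then show ?thesis using step.IH by blast
    qed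
  qed
  then show thesis using that by blast
qed

theorem lemma1:
  fixes X :: "'a set" and P W R :: "'a rel"
  assumes "finite X" and "ranking X P" and "tournament X W"
    and "efficient X P W R"
  shows "unimprovable X P W R"
proof -
  have R: "ranking X R" using assms(4) unfolding efficient_def by blast
  have "False" if feasible: "feasible X W R'" and "R' \<noteq> R" and aligned: "more_aligned P R' R"
    for R'
  proof -
    have R': "ranking X R'" using feasible unfolding feasible_def by blast
    obtain S where "S \<subseteq> W" and R'_eq: "R' = trancl S"
      using feasible_eq_trancl[OF assms(3) feasible] .
    have "S \<subseteq> X \<times> X" using \<open>S \<subseteq> W\<close> assms(3) unfolding tournament_def by blast
    obtain x y where "(x, y) \<in> R'" "(y, x) \<in> R"
      using ranking_neq_reversed_pair[OF R R' \<open>R' \<noteq> R\<close>] .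
    moreover have "trans R" "total_on X R" using R unfolding ranking_def proto_ranking_def by auto
    ultimately obtain a b where ab: "(a, b) \<in> S" and ba: "(b, a) \<in> R"
      using trancl_reversed_edge[of x y S X R] \<open>S \<subseteq> X \<times> X\<close> R'_eq by blast
    have "(a, b) \<in> R'" unfolding R'_eq using ab by (rule r_into_trancl')
    have "(a, b) \<in> P \<or> (b, a) \<in> P"
      using ranking_converse_if_not_mem[OF assms(2) R' \<open>(a, b) \<in> R'\<close>] by blast
    then show False
    proof
      assume "(a, b) \<in> P"
      with ab \<open>S \<subseteq> W\<close> have "(a, b) \<in> R" using assms(4) unfolding efficient_def by blast
      then show False using ranking_asym[OF R ba] by contradiction
    next
      assume "(b, a) \<in> P"
      with ba have "(b, a) \<in> R'" using aligned unfolding more_aligned_def by blast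
      then show False using ranking_asym[OF R' \<open>(a, b) \<in> R'\<close>] by contradiction
    qed
  qed
  then show ?thesis using R unfolding unimprovable_def by blast
qed

end
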